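(* Let $\mathcal P$ be a bounded distribution and consider Algorithm 1 (described in the context) run with a parameter $C$. If $C\ge 9$ and $T\ge m(\bar b+\bar a)^2$, then $$\Pr\left(\forall t\in[T+1],\ \|\bm p^t\|_2\le 2W\right)\ge 1-\frac mT.$$
   Context: Online linear programming with replenishment: $m$ resources, horizon $T$; tuples $(r_t,\bm a_t,\bm b_t)\in\mathbb{R}\times\mathbb{R}^m\times\mathbb{R}^m_{\ge0}$, $t=1,\dots,T$, are i.i.d. from a distribution $\mathcal P$; in period $t$ each resource $j$ is replenished by $b_{jt}$, the order $(r_t,\bm a_t)$ is revealed, and a decision $x_t\in\{0,1\}$ is made. Bounded distribution: constants $\bar r,\bar a,\bar b>0$ with $|r|<\bar r$, $\|\bm a\|_2<\bar a$, $\|\bm b\|_\infty<\bar b$ a.s., and $\underline b>0$ with $\mathbb{E}[b_j]>\underline b$ for all $j\in[m]$. Algorithm 1 (inputs $\bar r,\bar a,\bar b,\underline b,T$, parameter $C>0$): set $W=2+\left\lceil\max\left(\frac{8\sqrt m\bar r}{\underline b},\frac{24\sqrt m(\bar b+\bar a)\bar b^2}{\underline b^2},\frac{\bar r+2m(\bar b^2+\bar a^2)}{\sqrt m(\bar b+\bar a)}\right)\right\rceil$ and $\kappa=\lceil 4W\sqrt{CT\ln T}/\underline b\rceil$. Initialize $p^1_j=0$, $\ell_{j,1}=0$. For $t=1,\dots,T$: if $t\le\kappa$, set $x_t=0$ and $p^{t+1}_j=0$ for all $j$; otherwise set $x_t=\mathbb{I}(\forall j,\ \ell_{j,t}\ge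 a_{jt})\cdot\mathbb{I}(r_t>\langle\bm p^t,\bm a_t\rangle)$ and $p^{t+1}_j=\left[p^t_j-\frac{1}{\sqrt{CT\ln T}}\left(b_{jt}-a_{jt}\mathbb{I}(r_t>\langle\bm p^t,\bm a_t\rangle)\right)\right]^+$ for all $j$. Then $\ell_{j,t+1}=\ell_{j,t}+b_{jt}-a_{jt}x_t$. Here $\bm p^t=(p^t_1,\dots,p^t_m)$ and $[y]^+=\max(y,0)$. *)

theory Defs
  imports "HOL-Probability.Probability"
begin

definition olp_W :: "nat \<Rightarrow> real \<Rightarrow> real \<Rightarrow> real \<Rightarrow> real \<Rightarrow> real" where
  "olp_W m rbar abar bbar blow =
     2 + real_of_int (ceiling (max (max (8 * sqrt (real m) * rbar / blow)
                                        (24 * sqrt (real m) * (bbar + abar) * bbar^2 / blow^2))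
                                   ((rbar + 2 * real m * (bbar^2 + abar^2)) / (sqrt (real m) * (bbar + abar)))))"

definition olp_kappa :: "real \<Rightarrow> real \<Rightarrow> real \<Rightarrow> nat \<Rightarrow> real" where
  "olp_kappa W blow C T = real_of_int (ceiling (4 * W * sqrt (C * real T * ln (real T)) / blow))"

text \<open>State of Algorithm 1 at the start of period t (t >= 1): (p^t, l_t).
  Index 0 is a dummy.\<close>
fun olp_state :: "real \<Rightarrow> real \<Rightarrow> (nat \<Rightarrow> real \<times> (real^'m) \<times> (real^'m)) \<Rightarrow> nat \<Rightarrow> (real^'m) \<times> (real^'m)" where
  "olp_state eta kappa \<omega> 0 = (0, 0)"
| "olp_state eta kappa \<omega> (Suc t) =
     (if t = 0 then (0, 0) else
      (let (p, l) = olp_state eta kappa \<omega> t;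
           (r, a, b) = \<omega> t;
           ind = (r > a \<bullet> p);
           x = (if real t \<le> kappa then False else (\<forall>j. l $ j \<ge> a $ j) \<and> ind)
       in ((if real t \<le> kappa then 0
            else (\<chi> j. max 0 (p $ j - eta * (b $ j - a $ j * (if ind then 1 else 0))))),
           l + b - (if x then a else 0))))"

definition olp_price :: "real \<Rightarrow> real \<Rightarrow> real \<Rightarrow> real \<Rightarrow> real \<Rightarrow> nat \<Rightarrow> (nat \<Rightarrow> real \<times> (real^'m) \<times> (real^'m)) \<Rightarrow> nat \<Rightarrow> (real^'m)" where
  "olp_price rbar abar bbar blow C T \<omega> t =
     fst (olp_state (1 / sqrt (C * real T * ln (real T)))
                    (olp_kappa (olp_W CARD('m) rbar abar bbar blow) blow C T) \<omega> t)"

end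

theory Submission
  imports Defs
begin

(* Outside the ball of radius W the projected subgradient step has negative drift: every mean
   replenishment exceeds blow, and W is large enough that neither the revenue term rbar nor the
   second-order term eta G^2 (with G = sqrt m bbar + abar bounding the subgradient) can
   compensate. For theta eta = blow / (m bbar^2) this makes exp (theta |p|) a supermartingale
   there, while inside the ball a step moves the price by at most eta G. Hence
   E exp (theta |p^t|) grows at most linearly in t, and Chernoff's inequality at level 2 W with a
   union bound over t <= T + 1 bounds the failure probability by 1 / T. *)

type_synonym 'm order = "real \<times> (real^'m) \<times> (real^'m)"

definition subgradient :: "real^'m \<Rightarrow> 'm order \<Rightarrow> real^'m" where
  "subgradient p = (\<lambda>(r, a, b). b - (if a \<bullet> p < r then a else 0))"

definition price_step :: "real \<Rightarrow> real^'m \<Rightarrow> 'm order \<Rightarrow> real^'m" where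
  "price_step \<eta> p y = (\<chi> j. max 0 ((p - \<eta> *\<^sub>R subgradient p y) $ j))"

fun price :: "real \<Rightarrow> real \<Rightarrow> (nat \<Rightarrow> 'm order) \<Rightarrow> nat \<Rightarrow> real^'m" where
  "price \<eta> \<kappa> \<omega> 0 = 0"
| "price \<eta> \<kappa> \<omega> (Suc t) =
     (if t = 0 \<or> real t \<le> \<kappa> then 0 else price_step \<eta> (price \<eta> \<kappa> \<omega> t) (\<omega> t))"

lemma fst_olp_state: "fst (olp_state \<eta> \<kappa> \<omega> t) = price \<eta> \<kappa> \<omega> t"
proof (induction t)
  case (Suc t)
  obtain p l where "olp_state \<eta> \<kappa> \<omega> t = (p, l)" by fastforce
  moreover obtain r a b where "\<omega> t = (r, a, b)" by (cases "\<omega> t") auto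
  ultimately show ?case
    using Suc.IH by (auto simp: Let_def price_step_def subgradient_def)
qed simp

lemma price_cong: "(\<And>s. s < t \<Longrightarrow> \<omega> s = \<omega>' s) \<Longrightarrow> price \<eta> \<kappa> \<omega> t = price \<eta> \<kappa> \<omega>' t"
  by (induction t) auto

lemma price_nonneg: "0 \<le> price \<eta> \<kappa> \<omega> t $ j"
  by (cases t) (auto simp: price_step_def)

lemma price_warm_up: "real t \<le> \<kappa> + 1 \<Longrightarrow> price \<eta> \<kappa> \<omega> t = 0"
  by (cases t) auto

lemma price_step_measurable:
  "(\<lambda>z. price_step \<eta> (fst z) (snd z)) \<in> borel_measurable (borel :: ((real^'m) \<times> 'm order) measure)"
proof -
  have "(\<lambda>z. price_step \<eta> (fst z) (snd z)) = (\<lambda>z::(real^'m) \<times> 'm order.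
          if fst (snd (snd z)) \<bullet> fst z < fst (snd z)
          then \<chi> j. max 0 ((fst z - \<eta> *\<^sub>R (snd (snd (snd z)) - fst (snd (snd z)))) $ j)
          else \<chi> j. max 0 ((fst z - \<eta> *\<^sub>R snd (snd (snd z))) $ j))"
    by (auto simp: fun_eq_iff price_step_def subgradient_def split: prod.splits)
  also have "\<dots> \<in> borel_measurable borel"
    by (intro measurable_If borel_measurable_continuous_onI continuous_intros borel_measurable_less)
  finally show ?thesis .
qed

definition bounded_order :: "real \<Rightarrow> real \<Rightarrow> real \<Rightarrow> 'm::finite order \<Rightarrow> bool" where
  "bounded_order rbar abar bbar =
     (\<lambda>(r, a, b). \<bar>r\<bar> < rbar \<and> norm a < abar \<and> (\<forall>j. \<bar>b $ j\<bar> < bbar) \<and> (\<forall>j. 0 \<le> b $ j))"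

lemma norm_le_sqrt_card_mult:
  fixes x :: "real^'n"
  assumes "\<And>j. \<bar>x $ j\<bar> \<le> c"
  shows "norm x \<le> sqrt (real CARD('n)) * c"
proof -
  have "norm x \<le> L2_set (\<lambda>_. c) (UNIV :: 'n set)"
    unfolding norm_vec_def by (rule L2_set_mono) (use assms in auto)
  also have "\<dots> = sqrt (real CARD('n)) * c"
    using assms[of undefined] by (simp add: L2_set_constant)
  finally show ?thesis .
qed

lemma norm_subgradient_le:
  fixes p :: "real^'m"
  assumes "bounded_order rbar abar bbar (r, a, b)"
  shows "norm (subgradient p (r, a, b)) \<le> sqrt (real CARD('m)) * bbar + abar"
proof -
  have "norm (subgradient p (r, a, b)) \<le> norm b + norm a"
    unfolding subgradient_def using norm_triangle_ineq4[of b a] by auto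
  also have "\<dots> \<le> sqrt (real CARD('m)) * bbar + abar"
    using assms norm_le_sqrt_card_mult[of b bbar]
    by (auto simp: bounded_order_def less_imp_le)
  finally show ?thesis .
qed

lemma inner_subgradient_ge:
  assumes "bounded_order rbar abar bbar (r, a, b)"
  shows "p \<bullet> b - rbar \<le> p \<bullet> subgradient p (r, a, b)"
  using assms by (auto simp: bounded_order_def subgradient_def inner_diff_right inner_commute)

lemma norm_price_step_le: "norm (price_step \<eta> p y) \<le> norm (p - \<eta> *\<^sub>R subgradient p y)"
  by (rule norm_le_componentwise_cart) (simp add: price_step_def)

lemma norm_price_step_le_add:
  fixes p :: "real^'m"
  assumes "bounded_order rbar abar bbar y" "0 \<le> \<eta>"
  shows "norm (price_step \<eta> p y) \<le> norm p + \<eta> * (sqrt (real CARD('m)) * bbar + abar)"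
proof -
  obtain r a b where y: "y = (r, a, b)" by (cases y) auto
  have "norm (price_step \<eta> p y) \<le> norm p + norm (\<eta> *\<^sub>R subgradient p y)"
    using norm_price_step_le norm_triangle_ineq4 order_trans by blast
  also have "\<dots> \<le> norm p + \<eta> * (sqrt (real CARD('m)) * bbar + abar)"
    using norm_subgradient_le[of rbar abar bbar r a b p] assms by (simp add: y mult_left_mono)
  finally show ?thesis .
qed

lemma norm_price_step_drift:
  fixes p :: "real^'m"
  assumes y: "bounded_order rbar abar bbar (r, a, b)" and "0 \<le> \<eta>" "0 < W" "W \<le> norm p"
    and drift: "rbar / W + \<eta> * (sqrt (real CARD('m)) * bbar + abar)\<^sup>2 / (2 * W) \<le> \<beta>"
  shows "norm (price_step \<eta> p (r, a, b)) \<le> norm p + \<eta> * (\<beta> - p \<bullet> b / norm p)"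
proof -
  define G where "G = sqrt (real CARD('m)) * bbar + abar"
  define g where "g = subgradient p (r, a, b)"
  define x where "x = norm p"
  define n where "n = norm (price_step \<eta> p (r, a, b))"
  have x: "0 < x" "W \<le> x" using assms unfolding x_def by auto
  have "rbar \<ge> 0" using y by (auto simp: bounded_order_def)
  have "n\<^sup>2 \<le> (norm (p - \<eta> *\<^sub>R g))\<^sup>2"
    unfolding n_def g_def by (intro power_mono norm_price_step_le) simp
  also have "\<dots> = x\<^sup>2 - 2 * \<eta> * (p \<bullet> g) + \<eta>\<^sup>2 * (norm g)\<^sup>2"
    unfolding x_def power2_norm_eq_inner
    by (simp add: inner_diff_left inner_diff_right inner_commute[of g p] power2_eq_square algebra_simps)
  also have "\<dots> \<le> x\<^sup>2 - 2 * \<eta> * (p \<bullet> b - rbar) + \<eta>\<^sup>2 * G\<^sup>2"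
    using inner_subgradient_ge[OF y, of p] norm_subgradient_le[OF y, of p] \<open>0 \<le> \<eta>\<close> x
    by (intro add_mono diff_mono mult_left_mono power_mono) (auto simp: g_def G_def)
  finally have n2: "n\<^sup>2 \<le> x\<^sup>2 - 2 * \<eta> * (p \<bullet> b - rbar) + \<eta>\<^sup>2 * G\<^sup>2" .
  \<comment> \<open>\<open>2 x n \<le> n\<^sup>2 + x\<^sup>2\<close> turns the bound on \<open>n\<^sup>2\<close> into a bound on \<open>n\<close> that is linear in \<open>p \<bullet> b\<close>.\<close>
  have "2 * x * n \<le> n\<^sup>2 + x\<^sup>2"
    using sum_squares_bound[of x n] by (simp add: power2_eq_square algebra_simps)
  with n2 have "2 * x * n \<le> 2 * x\<^sup>2 - 2 * \<eta> * (p \<bullet> b) + 2 * \<eta> * rbar + \<eta>\<^sup>2 * G\<^sup>2"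
    by (simp add: algebra_simps)
  then have "n \<le> (2 * x\<^sup>2 - 2 * \<eta> * (p \<bullet> b) + 2 * \<eta> * rbar + \<eta>\<^sup>2 * G\<^sup>2) / (2 * x)"
    using x by (simp add: pos_le_divide_eq mult.commute)
  also have "\<dots> = x - \<eta> * (p \<bullet> b) / x + \<eta> * (rbar / x + \<eta> * G\<^sup>2 / (2 * x))"
    using x by (simp add: field_simps power2_eq_square)
  also have "\<dots> \<le> x - \<eta> * (p \<bullet> b) / x + \<eta> * (rbar / W + \<eta> * G\<^sup>2 / (2 * W))"
    using x \<open>0 < W\<close> \<open>0 \<le> rbar\<close> \<open>0 \<le> \<eta>\<close>
    by (intro add_left_mono mult_left_mono add_mono divide_left_mono mult_nonneg_nonneg) auto
  also have "\<dots> \<le> x - \<eta> * (p \<bullet> b) / x + \<eta> * \<beta>"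
    using drift \<open>0 \<le> \<eta>\<close> by (intro add_left_mono mult_left_mono) (auto simp: G_def)
  finally show ?thesis by (simp add: n_def x_def algebra_simps)
qed

lemma exp_neg_le_quadratic:
  fixes y :: real
  assumes "0 \<le> y"
  shows "exp (- y) \<le> 1 - y + y\<^sup>2 / 2"
proof -
  define h where "h z = 1 - z + z\<^sup>2 / 2 - exp (- z)" for z :: real
  have "h 0 \<le> h y"
  proof (rule DERIV_nonneg_imp_nondecreasing[OF assms])
    fix z :: real
    have "(h has_real_derivative (-1 + z + exp (- z))) (at z)"
      unfolding h_def by (auto intro!: derivative_eq_intros simp: power2_eq_square)
    moreover have "0 \<le> -1 + z + exp (- z)"
      using exp_ge_add_one_self[of "-z"] by simp
    ultimately show "\<exists>d. (h has_real_derivative d) (at z) \<and> 0 \<le> d" by blast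
  qed
  then show ?thesis by (simp add: h_def)
qed

lemma exp_norm_price_step_le:
  fixes p :: "real^'m"
  assumes y: "bounded_order rbar abar bbar (r, a, b)" and p: "\<forall>j. 0 \<le> p $ j"
    and "0 \<le> \<eta>" "0 < W" "W \<le> norm p" "0 \<le> \<theta>"
    and drift: "rbar / W + \<eta> * (sqrt (real CARD('m)) * bbar + abar)\<^sup>2 / (2 * W) \<le> \<beta>"
  shows "exp (\<theta> * norm (price_step \<eta> p (r, a, b)))
           \<le> exp (\<theta> * norm p + \<theta> * \<eta> * \<beta>)
              * (1 - \<theta> * \<eta> * (p \<bullet> b) / norm p + (\<theta> * \<eta>)\<^sup>2 * (real CARD('m) * bbar\<^sup>2) / 2)"
proof -
  define s where "s = \<theta> * \<eta>"
  define X where "X = p \<bullet> b / norm p"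
  have "0 < norm p" using assms by linarith
  have b: "\<forall>j. 0 \<le> b $ j" "\<forall>j. \<bar>b $ j\<bar> < bbar" using y by (auto simp: bounded_order_def)
  have "0 \<le> p \<bullet> b"
    using p b by (auto simp: inner_vec_def intro!: sum_nonneg)
  then have "0 \<le> s * X" using assms \<open>0 < norm p\<close> by (simp add: s_def X_def)
  have "norm b \<le> sqrt (real CARD('m)) * bbar"
    using b by (intro norm_le_sqrt_card_mult less_imp_le) auto
  then have "p \<bullet> b \<le> norm p * (sqrt (real CARD('m)) * bbar)"
    using norm_cauchy_schwarz[of p b] \<open>0 < norm p\<close> by (meson mult_left_mono norm_ge_zero order_trans)
  then have "X \<le> sqrt (real CARD('m)) * bbar"
    using \<open>0 < norm p\<close> by (simp add: X_def pos_divide_le_eq mult.commute)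
  moreover have "0 \<le> X" using \<open>0 \<le> p \<bullet> b\<close> by (simp add: X_def)
  ultimately have "X\<^sup>2 \<le> (sqrt (real CARD('m)) * bbar)\<^sup>2" by (rule power_mono)
  then have "X\<^sup>2 \<le> real CARD('m) * bbar\<^sup>2" by (simp add: power_mult_distrib)
  have "\<theta> * norm (price_step \<eta> p (r, a, b)) \<le> \<theta> * norm p + s * \<beta> + - (s * X)"
    using mult_left_mono[OF norm_price_step_drift[OF y \<open>0 \<le> \<eta>\<close> \<open>0 < W\<close> \<open>W \<le> norm p\<close> drift] \<open>0 \<le> \<theta>\<close>]
    by (simp add: s_def X_def algebra_simps)
  then have "exp (\<theta> * norm (price_step \<eta> p (r, a, b))) \<le> exp (\<theta> * norm p + s * \<beta>) * exp (- (s * X))"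
    by (simp flip: exp_add)
  also have "\<dots> \<le> exp (\<theta> * norm p + s * \<beta>) * (1 - s * X + (s * X)\<^sup>2 / 2)"
    using exp_neg_le_quadratic[OF \<open>0 \<le> s * X\<close>] by simp
  also have "\<dots> \<le> exp (\<theta> * norm p + s * \<beta>) * (1 - s * X + s\<^sup>2 * (real CARD('m) * bbar\<^sup>2) / 2)"
    using \<open>X\<^sup>2 \<le> real CARD('m) * bbar\<^sup>2\<close> by (simp add: power_mult_distrib mult_left_mono)
  finally show ?thesis by (simp add: s_def X_def mult.assoc)
qed

lemma nn_integral_le_integral_of_AE_le:
  fixes f h :: "'a \<Rightarrow> real"
  assumes "integrable M h" "AE x in M. 0 \<le> f x \<and> f x \<le> h x"
  shows "(\<integral>\<^sup>+x. f x \<partial>M) \<le> ennreal (\<integral>x. h x \<partial>M)"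
proof -
  have "AE x in M. ennreal (f x) \<le> ennreal (h x)"
    using assms(2) by eventually_elim (simp add: ennreal_leI)
  then have "(\<integral>\<^sup>+x. f x \<partial>M) \<le> (\<integral>\<^sup>+x. h x \<partial>M)"
    by (rule nn_integral_mono_AE)
  also have "\<dots> = ennreal (\<integral>x. h x \<partial>M)"
  proof (rule nn_integral_eq_integral[OF assms(1)])
    show "AE x in M. 0 \<le> h x"
      using assms(2) by eventually_elim linarith
  qed
  finally show ?thesis .
qed

lemma (in prob_space) prob_norm_gt_le_exp_moment:
  fixes X :: "'a \<Rightarrow> 'b::real_normed_vector"
  assumes "X \<in> borel_measurable M" "0 < \<theta>" "0 \<le> E"
    and moment: "(\<integral>\<^sup>+x. exp (\<theta> * norm (X x)) \<partial>M) \<le> ennreal E"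
  shows "prob {x \<in> space M. c < norm (X x)} \<le> E * exp (- (\<theta> * c))"
proof -
  have "emeasure M {x \<in> space M. c < norm (X x)} \<le> emeasure M {x \<in> space M. c \<le> norm (X x)}"
    using assms(1) by (intro emeasure_mono) auto
  also have "\<dots> \<le> exp (- \<theta> * c) * (\<integral>\<^sup>+x. ennreal (exp (\<theta> * norm (X x))) * indicator (space M) x \<partial>M)"
    using assms(1,2) by (intro Chernoff_ineq_nn_integral_ge) auto
  also have "(\<integral>\<^sup>+x. ennreal (exp (\<theta> * norm (X x))) * indicator (space M) x \<partial>M)
               = (\<integral>\<^sup>+x. exp (\<theta> * norm (X x)) \<partial>M)"
    by (intro nn_integral_cong) simp
  also have "exp (- \<theta> * c) * \<dots> \<le> exp (- \<theta> * c) * ennreal E"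
    using moment by (rule mult_left_mono) simp
  finally show ?thesis
    using \<open>0 \<le> E\<close> by (simp add: emeasure_eq_measure mult.commute flip: ennreal_mult)
qed

lemma (in prob_space) prob_all_ge_one_minus_sum:
  assumes "finite I" "\<And>i. i \<in> I \<Longrightarrow> {x \<in> space M. P i x} \<in> events"
  shows "1 - (\<Sum>i\<in>I. prob {x \<in> space M. \<not> P i x}) \<le> prob {x \<in> space M. \<forall>i\<in>I. P i x}"
proof -
  have bad: "{x \<in> space M. \<not> P i x} \<in> events" if "i \<in> I" for i
  proof -
    have "{x \<in> space M. \<not> P i x} = space M - {x \<in> space M. P i x}" by auto
    then show ?thesis using assms(2)[OF that] by auto
  qed
  have "space M - {x \<in> space M. \<forall>i\<in>I. P i x} = (\<Union>i\<in>I. {x \<in> space M. \<not> P i x})"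
    by auto
  then have "prob (space M - {x \<in> space M. \<forall>i\<in>I. P i x}) \<le> (\<Sum>i\<in>I. prob {x \<in> space M. \<not> P i x})"
    using assms(1) bad by (auto intro: finite_measure_subadditive_finite)
  moreover have "{x \<in> space M. \<forall>i\<in>I. P i x} \<in> events"
    using assms by (intro sets.sets_Collect_finite_All) auto
  ultimately show ?thesis
    by (simp add: prob_compl)
qed

lemma rbar_div_olp_W_le:
  fixes m :: nat
  assumes "1 \<le> m" "0 < rbar" "0 < blow"
  shows "rbar / olp_W m rbar abar bbar blow \<le> blow / 8"
proof -
  have "8 * rbar / blow \<le> 8 * sqrt (real m) * rbar / blow"
    using assms by (simp add: divide_right_mono)
  also have "\<dots> \<le> olp_W m rbar abar bbar blow - 2"
    unfolding olp_W_def by linarith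
  finally have "8 * rbar / blow \<le> olp_W m rbar abar bbar blow - 2" .
  moreover have "0 < 8 * rbar / blow" using assms by simp
  ultimately have "8 * rbar / blow \<le> olp_W m rbar abar bbar blow" "0 < olp_W m rbar abar bbar blow"
    by linarith+
  then show ?thesis
    using assms by (simp add: field_simps)
qed

lemma grad_bound_le_olp_W:
  fixes m :: nat
  assumes "1 \<le> m" "0 < abar" "0 < bbar" "0 < rbar"
  shows "sqrt (real m) * bbar + abar \<le> olp_W m rbar abar bbar blow"
proof -
  have "0 < sqrt (real m) * (bbar + abar)" using assms by simp
  have "(sqrt (real m) * (bbar + abar)) * (sqrt (real m) * (bbar + abar)) = real m * (bbar + abar)\<^sup>2"
    by (simp add: power2_eq_square algebra_simps)
  also have "\<dots> \<le> real m * (2 * (bbar\<^sup>2 + abar\<^sup>2))"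
    using sum_squares_bound[of bbar abar] by (intro mult_left_mono) (auto simp: power2_eq_square algebra_simps)
  also have "\<dots> \<le> rbar + 2 * real m * (bbar\<^sup>2 + abar\<^sup>2)"
    using assms by (simp add: algebra_simps)
  finally have "sqrt (real m) * (bbar + abar) \<le> (rbar + 2 * real m * (bbar\<^sup>2 + abar\<^sup>2)) / (sqrt (real m) * (bbar + abar))"
    using \<open>0 < sqrt (real m) * (bbar + abar)\<close> by (simp add: pos_le_divide_eq)
  also have "\<dots> \<le> olp_W m rbar abar bbar blow"
    unfolding olp_W_def by linarith
  finally have "sqrt (real m) * (bbar + abar) \<le> olp_W m rbar abar bbar blow" .
  moreover have "abar \<le> sqrt (real m) * abar"
    using assms by simp
  ultimately show ?thesis
    by (simp add: distrib_left)
qed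

lemma step_size_le:
  fixes C :: real and T :: nat
  assumes "9 \<le> C" "2 \<le> T"
  shows "1 \<le> C * ln T" and "1 / sqrt (C * T * ln T) \<le> 1 / 3"
proof -
  have "1 / 2 \<le> ln (real T)"
    using exp_half_le2 assms(2) by (subst ln_ge_iff) auto
  then show "1 \<le> C * ln T"
    using mult_mono[OF assms(1) \<open>1 / 2 \<le> ln T\<close>] assms(1) by linarith
  have "1 \<le> T * ln T"
    using mult_mono[of 2 "real T" "1 / 2" "ln T"] assms(2) \<open>1 / 2 \<le> ln T\<close> by auto
  then have "9 \<le> C * T * ln T"
    using mult_mono[OF assms(1) \<open>1 \<le> T * ln T\<close>] assms(1) by (simp add: mult.assoc)
  then have "3 \<le> sqrt (C * T * ln T)"
    using real_sqrt_le_mono[of 9] by (simp add: real_sqrt_eq_iff[symmetric] del: real_sqrt_eq_iff)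
  then show "1 / sqrt (C * T * ln T) \<le> 1 / 3"
    using \<open>9 \<le> C * T * ln T\<close> by (intro divide_left_mono) auto
qed

lemma step_size_mult_le:
  fixes C W blow :: real and T :: nat
  assumes "0 < C" "2 \<le> T" "0 < blow" "4 * W * sqrt (C * T * ln T) / blow < T"
  shows "1 / sqrt (C * T * ln T) * (4 * W * (C * ln T)) \<le> blow"
proof -
  define Q where "Q = sqrt (C * T * ln T)"
  have "0 < ln T" using assms(2) by simp
  then have "0 < Q" "Q\<^sup>2 = C * T * ln T"
    using assms by (auto simp: Q_def)
  then have "1 / Q * (4 * W * (C * ln T)) = 4 * W * Q / T"
    using assms(2) by (simp add: field_simps power2_eq_square)
  also have "\<dots> \<le> blow"
    using assms by (simp add: Q_def field_simps)
  finally show ?thesis by (simp add: Q_def)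
qed

lemma tail_sum_le_inverse:
  fixes \<theta> e W :: real and T :: nat
  assumes "2 \<le> T" "0 \<le> \<theta>" "0 \<le> e" "e \<le> W / 2" "5 * ln T \<le> \<theta> * W / 2"
  shows "(real T + 1) * (1 + T * exp (\<theta> * (W + e))) * exp (- (\<theta> * (2 * W))) \<le> 1 / T"
proof -
  define M where "M = exp (\<theta> * (W + e))"
  have "1 \<le> M" using assms by (simp add: M_def)
  then have "1 + T * M \<le> (T + 1) * M" by (simp add: algebra_simps)
  have "\<theta> * e \<le> \<theta> * W / 2"
    using mult_left_mono[OF \<open>e \<le> W / 2\<close> \<open>0 \<le> \<theta>\<close>] by simp
  have "M * exp (- (\<theta> * (2 * W))) = exp (\<theta> * e - \<theta> * W)"
    unfolding M_def exp_add[symmetric] by (simp add: algebra_simps)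
  also have "\<dots> \<le> exp (- (5 * ln T))"
    using \<open>\<theta> * e \<le> \<theta> * W / 2\<close> assms(5) by simp
  also have "\<dots> = 1 / T ^ 5"
    using assms(1) exp_of_nat_mult[of 5 "ln T"] by (simp add: exp_minus divide_inverse)
  finally have tail: "M * exp (- (\<theta> * (2 * W))) \<le> 1 / T ^ 5" .
  have "T + 1 \<le> T * T"
    using assms(1) mult_le_mono1[of 2 T T] by linarith
  then have "(T + 1)\<^sup>2 * T \<le> (T * T)\<^sup>2 * T"
    by (intro mult_right_mono power_mono) auto
  then have "real ((T + 1)\<^sup>2 * T) \<le> real (T ^ 5)"
    by (simp only: of_nat_le_iff) (simp add: power2_eq_square eval_nat_numeral)
  then have T5: "(real T + 1)\<^sup>2 * (1 / real T ^ 5) \<le> 1 / real T"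
    using assms(1) by (simp add: divide_le_eq field_split_simps)
  have "(T + 1) * (1 + T * M) * exp (- (\<theta> * (2 * W))) \<le> (T + 1) * ((T + 1) * M) * exp (- (\<theta> * (2 * W)))"
    using \<open>1 + T * M \<le> (T + 1) * M\<close> by (intro mult_right_mono mult_left_mono) auto
  also have "\<dots> = (T + 1)\<^sup>2 * (M * exp (- (\<theta> * (2 * W))))"
    by (simp add: power2_eq_square algebra_simps)
  also have "\<dots> \<le> (T + 1)\<^sup>2 * (1 / T ^ 5)"
    using tail by (intro mult_left_mono) auto
  also have "\<dots> \<le> 1 / T"
    using T5 by (simp add: add.commute)
  finally show ?thesis by (simp add: M_def add.commute)
qed

locale order_distribution = prob_space D for D :: "'m::finite order measure" +
  assumes sets_D: "sets D = sets borel"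
begin

lemma measurable_price:
  assumes "{1..<t} \<subseteq> I"
  shows "(\<lambda>\<omega>. price \<eta> \<kappa> \<omega> t) \<in> borel_measurable (PiM I (\<lambda>_. D))"
  using assms
proof (induction t)
  case (Suc t)
  show ?case
  proof (cases "t = 0 \<or> real t \<le> \<kappa>")
    case False
    then have "t \<in> I" using Suc.prems by auto
    have "measurable (PiM I (\<lambda>_. D)) D = measurable (PiM I (\<lambda>_. D)) borel"
      by (rule measurable_cong_sets[OF refl sets_D])
    then have "(\<lambda>\<omega>. \<omega> t) \<in> PiM I (\<lambda>_. D) \<rightarrow>\<^sub>M borel"
      using measurable_component_singleton[OF \<open>t \<in> I\<close>] by blast
    then have "(\<lambda>\<omega>. (price \<eta> \<kappa> \<omega> t, \<omega> t)) \<in> PiM I (\<lambda>_. D) \<rightarrow>\<^sub>M borel \<Otimes>\<^sub>M borel"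
      using Suc.IH Suc.prems by (intro measurable_Pair) (auto simp: subset_eq)
    moreover have "(\<lambda>z. price_step \<eta> (fst z) (snd z)) \<in> borel \<Otimes>\<^sub>M borel \<rightarrow>\<^sub>M borel"
      using price_step_measurable by (simp add: borel_prod)
    ultimately have "(\<lambda>z. price_step \<eta> (fst z) (snd z)) \<circ> (\<lambda>\<omega>. (price \<eta> \<kappa> \<omega> t, \<omega> t))
        \<in> borel_measurable (PiM I (\<lambda>_. D))"
      by (rule measurable_comp)
    then show ?thesis
      using False by (simp add: o_def)
  qed simp
qed simp

lemma nn_integral_exp_norm_price_Suc_le:
  assumes step: "\<And>p. (\<forall>j. 0 \<le> p $ j) \<Longrightarrow>
      (\<integral>\<^sup>+y. exp (\<theta> * norm (price_step \<eta> p y)) \<partial>D) \<le> exp (\<theta> * norm p) + ennreal M"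
    and "1 \<le> M" "finite I" "{1..t} \<subseteq> I"
  shows "(\<integral>\<^sup>+\<omega>. exp (\<theta> * norm (price \<eta> \<kappa> \<omega> (Suc t))) \<partial>PiM I (\<lambda>_. D))
           \<le> (\<integral>\<^sup>+\<omega>. exp (\<theta> * norm (price \<eta> \<kappa> \<omega> t)) \<partial>PiM I (\<lambda>_. D)) + ennreal M"
    (is "?lhs \<le> ?E t I + _")
proof (cases "t = 0 \<or> real t \<le> \<kappa>")
  case True
  interpret PiM: prob_space "PiM I (\<lambda>_. D)" by (intro prob_space_PiM prob_space_axioms)
  have "?lhs = 1" using True by (simp add: PiM.emeasure_space_1)
  also have "\<dots> \<le> ennreal M" using \<open>1 \<le> M\<close> by simp
  finally show ?thesis by (simp add: add_increasing)
next
  case False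
  interpret product_sigma_finite "\<lambda>_. D" by unfold_locales
  define J where "J = I - {t}"
  interpret PiJ: prob_space "PiM J (\<lambda>_. D)" by (intro prob_space_PiM prob_space_axioms)
  have I: "I = insert t J" "t \<notin> J" "finite J" "{1..<t} \<subseteq> J"
    using False assms(3,4) by (auto simp: J_def)
  \<comment> \<open>\<open>p\<^sup>t\<close> does not depend on \<open>\<omega> t\<close>: integrate out that coordinate first.\<close>
  have price_upd: "price \<eta> \<kappa> (x(t := y)) t = price \<eta> \<kappa> x t" for x y
    by (rule price_cong) auto
  have measurable_exp: "(\<lambda>\<omega>. ennreal (exp (\<theta> * norm (price \<eta> \<kappa> \<omega> s)))) \<in> borel_measurable (PiM I (\<lambda>_. D))"
    if "s \<le> Suc t" for s
  proof -
    have "{1..<s} \<subseteq> I" using that assms(4) by auto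
    from measurable_price[OF this] show ?thesis by measurable
  qed
  have "?lhs = (\<integral>\<^sup>+x. \<integral>\<^sup>+y. exp (\<theta> * norm (price \<eta> \<kappa> (x(t := y)) (Suc t))) \<partial>D \<partial>PiM J (\<lambda>_. D))"
    using I(2,3) measurable_exp[of "Suc t", unfolded I(1)] unfolding I(1)
    by (intro product_nn_integral_insert) auto
  also have "\<dots> = (\<integral>\<^sup>+\<omega>. \<integral>\<^sup>+y. exp (\<theta> * norm (price_step \<eta> (price \<eta> \<kappa> \<omega> t) y)) \<partial>D \<partial>PiM J (\<lambda>_. D))"
    using False by (simp add: price_upd)
  also have "\<dots> \<le> (\<integral>\<^sup>+\<omega>. exp (\<theta> * norm (price \<eta> \<kappa> \<omega> t)) + ennreal M \<partial>PiM J (\<lambda>_. D))"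
    by (intro nn_integral_mono step) (simp add: price_nonneg)
  also have "\<dots> = ?E t J + ennreal M"
  proof -
    from measurable_price[OF I(4)]
    have "(\<lambda>\<omega>. ennreal (exp (\<theta> * norm (price \<eta> \<kappa> \<omega> t)))) \<in> borel_measurable (PiM J (\<lambda>_. D))"
      by measurable
    then show ?thesis by (simp add: nn_integral_add PiJ.emeasure_space_1)
  qed
  also have "?E t J = ?E t I"
    using I(2,3) measurable_exp[of t, unfolded I(1)] unfolding I(1)
    by (subst product_nn_integral_insert) (auto simp: price_upd emeasure_space_1)
  finally show ?thesis .
qed

lemma nn_integral_exp_norm_price_le:
  assumes step: "\<And>p. (\<forall>j. 0 \<le> p $ j) \<Longrightarrow>
      (\<integral>\<^sup>+y. exp (\<theta> * norm (price_step \<eta> p y)) \<partial>D) \<le> exp (\<theta> * norm p) + ennreal M"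
    and "1 \<le> M" "finite I" "{1..n} \<subseteq> I"
  shows "(\<integral>\<^sup>+\<omega>. exp (\<theta> * norm (price \<eta> \<kappa> \<omega> (Suc n))) \<partial>PiM I (\<lambda>_. D)) \<le> ennreal (1 + real n * M)"
  using assms(4)
proof (induction n)
  case 0
  interpret PiM: prob_space "PiM I (\<lambda>_. D)" by (intro prob_space_PiM prob_space_axioms)
  show ?case by (simp add: PiM.emeasure_space_1)
next
  case (Suc n)
  have "{1..n} \<subseteq> I" using Suc.prems by auto
  have "(\<integral>\<^sup>+\<omega>. exp (\<theta> * norm (price \<eta> \<kappa> \<omega> (Suc (Suc n)))) \<partial>PiM I (\<lambda>_. D))
          \<le> (\<integral>\<^sup>+\<omega>. exp (\<theta> * norm (price \<eta> \<kappa> \<omega> (Suc n))) \<partial>PiM I (\<lambda>_. D)) + ennreal M"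
    by (rule nn_integral_exp_norm_price_Suc_le[OF step assms(2,3) Suc.prems])
  also have "\<dots> \<le> ennreal (1 + real n * M) + ennreal M"
    by (rule add_right_mono[OF Suc.IH[OF \<open>{1..n} \<subseteq> I\<close>]])
  also have "\<dots> = ennreal (1 + real (Suc n) * M)"
    using \<open>1 \<le> M\<close> by (simp flip: ennreal_plus add: algebra_simps)
  finally show ?case .
qed

lemma prob_norm_price_gt_le:
  assumes step: "\<And>p. (\<forall>j. 0 \<le> p $ j) \<Longrightarrow>
      (\<integral>\<^sup>+y. exp (\<theta> * norm (price_step \<eta> p y)) \<partial>D) \<le> exp (\<theta> * norm p) + ennreal M"
    and "0 < \<theta>" "1 \<le> M" "t \<in> {1..T+1}"
  shows "measure (PiM {1..T} (\<lambda>_. D)) {\<omega> \<in> space (PiM {1..T} (\<lambda>_. D)). c < norm (price \<eta> \<kappa> \<omega> t)}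
           \<le> (1 + T * M) * exp (- (\<theta> * c))"
proof -
  interpret P: prob_space "PiM {1..T} (\<lambda>_. D)" by (intro prob_space_PiM prob_space_axioms)
  obtain n where n: "t = Suc n" "n \<le> T" using assms(4) by (cases t) auto
  have "(\<integral>\<^sup>+\<omega>. exp (\<theta> * norm (price \<eta> \<kappa> \<omega> t)) \<partial>PiM {1..T} (\<lambda>_. D)) \<le> ennreal (1 + real n * M)"
    unfolding n(1) using n(2) by (intro nn_integral_exp_norm_price_le[OF step \<open>1 \<le> M\<close>]) auto
  also have "\<dots> \<le> ennreal (1 + T * M)"
    using n(2) \<open>1 \<le> M\<close> by (intro ennreal_leI add_left_mono mult_right_mono) auto
  finally show ?thesis
    using n \<open>0 < \<theta>\<close> \<open>1 \<le> M\<close>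
    by (intro P.prob_norm_gt_le_exp_moment measurable_price) auto
qed

lemma prob_all_norm_price_le_ge:
  assumes step: "\<And>p. (\<forall>j. 0 \<le> p $ j) \<Longrightarrow>
      (\<integral>\<^sup>+y. exp (\<theta> * norm (price_step \<eta> p y)) \<partial>D) \<le> exp (\<theta> * norm p) + ennreal M"
    and "0 < \<theta>" "1 \<le> M"
  shows "1 - (real T + 1) * (1 + T * M) * exp (- (\<theta> * c)) \<le> measure (PiM {1..T} (\<lambda>_. D))
           {\<omega> \<in> space (PiM {1..T} (\<lambda>_. D)). \<forall>t\<in>{1..T+1}. norm (price \<eta> \<kappa> \<omega> t) \<le> c}"
proof -
  let ?P = "PiM {1..T} (\<lambda>_. D)"
  interpret P: prob_space ?P by (intro prob_space_PiM prob_space_axioms)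
  have "(\<Sum>t\<in>{1..T+1}. P.prob {\<omega> \<in> space ?P. \<not> norm (price \<eta> \<kappa> \<omega> t) \<le> c})
          \<le> (\<Sum>t\<in>{1..T+1}. (1 + T * M) * exp (- (\<theta> * c)))"
    using prob_norm_price_gt_le[OF step assms(2,3)] by (intro sum_mono) (simp add: not_le)
  also have "\<dots> = (real T + 1) * (1 + T * M) * exp (- (\<theta> * c))"
    by simp
  finally have "(\<Sum>t\<in>{1..T+1}. P.prob {\<omega> \<in> space ?P. \<not> norm (price \<eta> \<kappa> \<omega> t) \<le> c})
          \<le> (real T + 1) * (1 + T * M) * exp (- (\<theta> * c))" .
  moreover have "1 - (\<Sum>t\<in>{1..T+1}. P.prob {\<omega> \<in> space ?P. \<not> norm (price \<eta> \<kappa> \<omega> t) \<le> c})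
          \<le> P.prob {\<omega> \<in> space ?P. \<forall>t\<in>{1..T+1}. norm (price \<eta> \<kappa> \<omega> t) \<le> c}"
  proof (rule P.prob_all_ge_one_minus_sum)
    fix t assume "t \<in> {1..T+1}"
    then have "(\<lambda>\<omega>. price \<eta> \<kappa> \<omega> t) \<in> borel_measurable ?P"
      by (intro measurable_price) auto
    then show "{\<omega> \<in> space ?P. norm (price \<eta> \<kappa> \<omega> t) \<le> c} \<in> P.events"
      by measurable
  qed simp
  ultimately show ?thesis by linarith
qed

end

locale bounded_order_distribution = order_distribution D for D :: "'m::finite order measure" +
  fixes rbar abar bbar blow :: real
  assumes rbar_pos: "0 < rbar" and abar_pos: "0 < abar" and bbar_pos: "0 < bbar"
    and blow_pos: "0 < blow"
    and AE_bounded_order: "AE y in D. bounded_order rbar abar bbar y"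
    and mean_supply_gt: "\<forall>j. blow < (\<integral>(r, a, b). b $ j \<partial>D)"
begin

lemma integrable_supply: "integrable D (\<lambda>y. snd (snd y) $ j)"
proof (rule integrable_const_bound[where B = bbar])
  show "AE y in D. norm (snd (snd y) $ j) \<le> bbar"
    using AE_bounded_order by eventually_elim (auto simp: bounded_order_def less_imp_le)
  show "(\<lambda>y. snd (snd y) $ j) \<in> borel_measurable D"
    unfolding measurable_cong_sets[OF sets_D refl]
    by (intro borel_measurable_continuous_onI continuous_intros)
qed

lemma integrable_inner_supply: "integrable D (\<lambda>y. p \<bullet> snd (snd y))"
  by (simp add: inner_vec_def integrable_supply)

lemma mean_inner_supply_ge:
  assumes "\<forall>j. 0 \<le> p $ j"
  shows "blow * norm p \<le> (\<integral>y. p \<bullet> snd (snd y) \<partial>D)"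
proof -
  have "blow * norm p \<le> blow * (\<Sum>j\<in>UNIV. p $ j)"
    using norm_le_l1_cart[of p] assms blow_pos by (intro mult_left_mono) auto
  also have "\<dots> \<le> (\<Sum>j\<in>UNIV. p $ j * (\<integral>y. snd (snd y) $ j \<partial>D))"
    unfolding sum_distrib_left
  proof (intro sum_mono)
    fix j
    have "blow \<le> (\<integral>y. snd (snd y) $ j \<partial>D)"
      using mean_supply_gt by (simp add: case_prod_unfold less_imp_le)
    from mult_right_mono[OF this spec[OF assms, of j]]
    show "blow * p $ j \<le> p $ j * (\<integral>y. snd (snd y) $ j \<partial>D)"
      by (simp add: mult.commute)
  qed
  also have "\<dots> = (\<integral>y. p \<bullet> snd (snd y) \<partial>D)"
    unfolding inner_vec_def inner_real_def by (subst Bochner_Integration.integral_sum) (auto simp: integrable_supply)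
  finally show ?thesis .
qed

lemma nn_integral_exp_norm_price_step_le_of_ge:
  fixes p :: "real^'m"
  assumes p: "\<forall>j. 0 \<le> p $ j" and "0 \<le> \<eta>" "0 < W" "W \<le> norm p" "0 \<le> \<theta>"
    and drift: "rbar / W + \<eta> * (sqrt (real CARD('m)) * bbar + abar)\<^sup>2 / (2 * W) \<le> blow / 4"
    and rate: "\<theta> * \<eta> = blow / (real CARD('m) * bbar\<^sup>2)"
  shows "(\<integral>\<^sup>+y. exp (\<theta> * norm (price_step \<eta> p y)) \<partial>D) \<le> exp (\<theta> * norm p)"
proof -
  define B where "B = real CARD('m) * bbar\<^sup>2"
  define s where "s = \<theta> * \<eta>"
  define K where "K = exp (\<theta> * norm p + s * (blow / 4))"
  define h where "h y = K * (1 + s\<^sup>2 * B / 2) - K * s / norm p * (p \<bullet> snd (snd y))" for y :: "'m order"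
  have "0 < B" "0 < norm p"
    using bbar_pos assms by (auto simp: B_def)
  have "0 \<le> s"
    using assms(2,5) by (simp add: s_def)
  \<comment> \<open>\<open>h\<close> is affine in the supply, so its mean is controlled by \<open>mean_inner_supply_ge\<close>.\<close>
  have bound: "AE y in D. exp (\<theta> * norm (price_step \<eta> p y)) \<le> h y"
    using AE_bounded_order
  proof eventually_elim
    case (elim y)
    obtain r a b where y: "y = (r, a, b)" by (cases y) auto
    from exp_norm_price_step_le[OF elim[unfolded y] p assms(2-5) drift]
    show ?case by (simp add: y h_def K_def s_def B_def algebra_simps)
  qed
  have "(\<integral>y. h y \<partial>D) = K * (1 + s\<^sup>2 * B / 2) - K * s / norm p * (\<integral>y. p \<bullet> snd (snd y) \<partial>D)"
    unfolding h_def using integrable_inner_supply by (simp add: prob_space)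
  also have "\<dots> \<le> K * (1 + s\<^sup>2 * B / 2) - K * s / norm p * (blow * norm p)"
    using mean_inner_supply_ge[OF p] \<open>0 \<le> s\<close> \<open>0 < norm p\<close>
    by (intro diff_left_mono mult_left_mono) (auto simp: K_def)
  also have "\<dots> = K * (1 - blow\<^sup>2 / (2 * B))"
    using rate \<open>0 < B\<close> \<open>0 < norm p\<close> by (simp add: s_def B_def field_simps power2_eq_square)
  also have "\<dots> \<le> K * exp (- (blow\<^sup>2 / (2 * B)))"
    using exp_ge_add_one_self[of "- (blow\<^sup>2 / (2 * B))"] by (simp add: K_def)
  also have "\<dots> = exp (\<theta> * norm p - blow\<^sup>2 / (4 * B))"
    using rate \<open>0 < B\<close> by (simp add: K_def s_def B_def field_simps power2_eq_square flip: exp_add)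
  also have "\<dots> \<le> exp (\<theta> * norm p)"
    using \<open>0 < B\<close> by simp
  finally have "(\<integral>y. h y \<partial>D) \<le> exp (\<theta> * norm p)" .
  moreover have "(\<integral>\<^sup>+y. exp (\<theta> * norm (price_step \<eta> p y)) \<partial>D) \<le> ennreal (\<integral>y. h y \<partial>D)"
    using bound unfolding h_def
    by (intro nn_integral_le_integral_of_AE_le) (auto simp: integrable_inner_supply elim!: eventually_mono)
  ultimately show ?thesis
    using ennreal_leI order_trans by blast
qed

lemma nn_integral_exp_norm_price_step_le:
  fixes p :: "real^'m"
  assumes p: "\<forall>j. 0 \<le> p $ j" and "0 \<le> \<eta>" "0 < W" "0 \<le> \<theta>"
    and drift: "rbar / W + \<eta> * (sqrt (real CARD('m)) * bbar + abar)\<^sup>2 / (2 * W) \<le> blow / 4"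
    and rate: "\<theta> * \<eta> = blow / (real CARD('m) * bbar\<^sup>2)"
  shows "(\<integral>\<^sup>+y. exp (\<theta> * norm (price_step \<eta> p y)) \<partial>D)
           \<le> exp (\<theta> * norm p) + ennreal (exp (\<theta> * (W + \<eta> * (sqrt (real CARD('m)) * bbar + abar))))"
proof (cases "W \<le> norm p")
  case True
  then show ?thesis
    using nn_integral_exp_norm_price_step_le_of_ge[OF assms(1-3) True assms(4-6)]
    by (simp add: add_increasing2)
next
  case False
  define M where "M = exp (\<theta> * (W + \<eta> * (sqrt (real CARD('m)) * bbar + abar)))"
  have "AE y in D. exp (\<theta> * norm (price_step \<eta> p y)) \<le> M"
    using AE_bounded_order
  proof eventually_elim
    case (elim y)
    have "norm (price_step \<eta> p y) \<le> W + \<eta> * (sqrt (real CARD('m)) * bbar + abar)"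
      using norm_price_step_le_add[OF elim \<open>0 \<le> \<eta>\<close>, of p] False by linarith
    then show ?case
      using \<open>0 \<le> \<theta>\<close> by (simp add: M_def mult_left_mono)
  qed
  then have "(\<integral>\<^sup>+y. exp (\<theta> * norm (price_step \<eta> p y)) \<partial>D) \<le> (\<integral>\<^sup>+y. M \<partial>D)"
    by (intro nn_integral_mono_AE) (auto elim!: eventually_mono intro: ennreal_leI)
  then show ?thesis
    by (simp add: M_def emeasure_space_1 add_increasing)
qed

lemma grad_bound_le_W:
  "sqrt (real CARD('m)) * bbar + abar \<le> olp_W CARD('m) rbar abar bbar blow"
  using grad_bound_le_olp_W[of "CARD('m)"] abar_pos bbar_pos rbar_pos by simp

lemma W_pos: "0 < olp_W CARD('m) rbar abar bbar blow"
proof -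
  have "0 < sqrt (real CARD('m)) * bbar + abar"
    using abar_pos bbar_pos by (simp add: add_nonneg_pos)
  with grad_bound_le_W show ?thesis by linarith
qed

lemma drift_condition:
  fixes C :: real and T :: nat
  defines "W \<equiv> olp_W CARD('m) rbar abar bbar blow" and "\<eta> \<equiv> 1 / sqrt (C * T * ln T)"
  assumes "9 \<le> C" "2 \<le> T" "4 * W * sqrt (C * T * ln T) / blow < T"
  shows "rbar / W + \<eta> * (sqrt (real CARD('m)) * bbar + abar)\<^sup>2 / (2 * W) \<le> blow / 4"
proof -
  define G where "G = sqrt (real CARD('m)) * bbar + abar"
  have "0 < W" "0 \<le> G" "G \<le> W" "0 \<le> \<eta>"
    using W_pos grad_bound_le_W abar_pos bbar_pos assms(3,4) by (auto simp: W_def G_def \<eta>_def)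
  have "\<eta> * G\<^sup>2 \<le> \<eta> * W\<^sup>2"
    using \<open>0 \<le> \<eta>\<close> power_mono[OF \<open>G \<le> W\<close> \<open>0 \<le> G\<close>] by (rule mult_left_mono[rotated])
  then have "\<eta> * G\<^sup>2 / (2 * W) \<le> \<eta> * W / 2"
    using \<open>0 < W\<close> by (simp add: field_simps power2_eq_square)
  also have "\<dots> \<le> \<eta> * (4 * W * (C * ln T)) / 8"
    using mult_left_mono[OF step_size_le(1)[OF assms(3,4)], of "\<eta> * W"] \<open>0 < W\<close> \<open>0 \<le> \<eta>\<close>
    by (simp add: algebra_simps)
  also have "\<dots> \<le> blow / 8"
  proof -
    have "\<eta> * (4 * W * (C * ln T)) \<le> blow"
      unfolding \<eta>_def using assms(3-5) blow_pos by (intro step_size_mult_le) auto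
    then show ?thesis by (simp add: mult_ac)
  qed
  finally have "\<eta> * G\<^sup>2 / (2 * W) \<le> blow / 8" .
  moreover have "rbar / W \<le> blow / 8"
    unfolding W_def using rbar_pos blow_pos by (intro rbar_div_olp_W_le) auto
  ultimately show ?thesis
    unfolding G_def by linarith
qed

lemma ln_le_exp_rate:
  fixes C :: real and T :: nat
  defines "W \<equiv> olp_W CARD('m) rbar abar bbar blow" and "\<eta> \<equiv> 1 / sqrt (C * T * ln T)"
  assumes "9 \<le> C" "2 \<le> T" "4 * W * sqrt (C * T * ln T) / blow < T"
  shows "5 * ln T \<le> blow / (real CARD('m) * bbar\<^sup>2 * \<eta>) * W / 2"
proof -
  define B where "B = real CARD('m) * bbar\<^sup>2"
  have "0 < B" using bbar_pos by (simp add: B_def)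
  have "0 < \<eta>" "0 \<le> ln T" "0 < W"
    using assms(3,4) W_pos by (auto simp: \<eta>_def W_def)
  have "\<eta> * (4 * W * (C * ln T)) \<le> blow"
    unfolding \<eta>_def using assms(3-5) blow_pos by (intro step_size_mult_le) auto
  then have "4 * W * (C * ln T) \<le> blow / \<eta>"
    using \<open>0 < \<eta>\<close> by (simp add: field_simps)
  have "sqrt (real CARD('m)) * bbar \<le> W"
    using grad_bound_le_W abar_pos by (simp add: W_def)
  then have "B \<le> W\<^sup>2"
    using power_mono[of "sqrt (real CARD('m)) * bbar" W 2] bbar_pos by (simp add: B_def power_mult_distrib)
  have "5 * ln T \<le> 2 * (C * ln T)"
    using mult_right_mono[OF assms(3) \<open>0 \<le> ln T\<close>] \<open>0 \<le> ln T\<close> by linarith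
  also have "\<dots> \<le> 2 * (C * ln T) * (W\<^sup>2 / B)"
  proof -
    have "1 \<le> W\<^sup>2 / B" using \<open>B \<le> W\<^sup>2\<close> \<open>0 < B\<close> by simp
    from mult_left_mono[OF this, of "2 * (C * ln T)"] show ?thesis
      using assms(3) \<open>0 \<le> ln T\<close> by simp
  qed
  also have "\<dots> = 4 * W * (C * ln T) * W / (2 * B)"
    by (simp add: power2_eq_square)
  also have "\<dots> \<le> blow / \<eta> * W / (2 * B)"
    using \<open>4 * W * (C * ln T) \<le> blow / \<eta>\<close> \<open>0 < W\<close> \<open>0 < B\<close>
    by (intro divide_right_mono mult_right_mono) auto
  also have "\<dots> = blow / (B * \<eta>) * W / 2"
    by simp
  finally show ?thesis by (simp add: B_def)
qed

theorem prob_norm_price_le_after_warm_up: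
  fixes C \<kappa> :: real and T :: nat
  defines "W \<equiv> olp_W CARD('m) rbar abar bbar blow" and "\<eta> \<equiv> 1 / sqrt (C * T * ln T)"
  assumes "9 \<le> C" "2 \<le> T" "4 * W * sqrt (C * T * ln T) / blow \<le> \<kappa>" "\<kappa> < T"
  shows "1 - 1 / T \<le> measure (PiM {1..T} (\<lambda>_. D))
           {\<omega> \<in> space (PiM {1..T} (\<lambda>_. D)). \<forall>t\<in>{1..T+1}. norm (price \<eta> \<kappa> \<omega> t) \<le> 2 * W}"
proof -
  define G where "G = sqrt (real CARD('m)) * bbar + abar"
  define \<theta> where "\<theta> = blow / (real CARD('m) * bbar\<^sup>2 * \<eta>)"
  define M where "M = exp (\<theta> * (W + \<eta> * G))"
  have less_T: "4 * W * sqrt (C * T * ln T) / blow < T" using assms(5,6) by linarith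
  have "0 < \<eta>" "\<eta> \<le> 1 / 3" "0 < W" "0 \<le> G" "G \<le> W"
    using assms(3,4) step_size_le(2)[OF assms(3,4)] W_pos grad_bound_le_W abar_pos bbar_pos
    by (auto simp: \<eta>_def W_def G_def)
  have "0 < \<theta>" using \<open>0 < \<eta>\<close> bbar_pos blow_pos by (simp add: \<theta>_def)
  have "\<eta> * G \<le> W / 2"
    using mult_mono[OF \<open>\<eta> \<le> 1 / 3\<close> \<open>G \<le> W\<close>] \<open>0 \<le> G\<close> \<open>0 < W\<close> by linarith
  have "1 \<le> M"
    using \<open>0 < \<theta>\<close> \<open>0 < W\<close> \<open>0 < \<eta>\<close> \<open>0 \<le> G\<close> by (simp add: M_def)
  have step: "(\<integral>\<^sup>+y. exp (\<theta> * norm (price_step \<eta> p y)) \<partial>D) \<le> exp (\<theta> * norm p) + ennreal M"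
    if "\<forall>j. 0 \<le> p $ j" for p :: "real^'m"
    unfolding M_def G_def
  proof (rule nn_integral_exp_norm_price_step_le[OF that])
    show "rbar / W + \<eta> * (sqrt (real CARD('m)) * bbar + abar)\<^sup>2 / (2 * W) \<le> blow / 4"
      unfolding W_def \<eta>_def using assms(3,4) less_T by (intro drift_condition) (simp_all add: W_def)
    show "\<theta> * \<eta> = blow / (real CARD('m) * bbar\<^sup>2)"
      using \<open>0 < \<eta>\<close> by (simp add: \<theta>_def)
  qed (use \<open>0 < \<eta>\<close> \<open>0 < W\<close> \<open>0 < \<theta>\<close> in auto)
  have "(real T + 1) * (1 + T * M) * exp (- (\<theta> * (2 * W))) \<le> 1 / T"
    unfolding M_def
  proof (rule tail_sum_le_inverse[OF assms(4)])
    show "5 * ln T \<le> \<theta> * W / 2"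
      unfolding \<theta>_def \<eta>_def W_def using assms(3,4) less_T by (intro ln_le_exp_rate) (simp_all add: W_def)
  qed (use \<open>0 < \<theta>\<close> \<open>0 < \<eta>\<close> \<open>0 \<le> G\<close> \<open>\<eta> * G \<le> W / 2\<close> in auto)
  moreover have "1 - (real T + 1) * (1 + T * M) * exp (- (\<theta> * (2 * W))) \<le> measure (PiM {1..T} (\<lambda>_. D))
      {\<omega> \<in> space (PiM {1..T} (\<lambda>_. D)). \<forall>t\<in>{1..T+1}. norm (price \<eta> \<kappa> \<omega> t) \<le> 2 * W}"
    by (rule prob_all_norm_price_le_ge[OF _ \<open>0 < \<theta>\<close> \<open>1 \<le> M\<close>]) (rule step)
  ultimately show ?thesis by linarith
qed

theorem prob_norm_price_le:
  fixes C :: real and T :: nat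
  defines "W \<equiv> olp_W CARD('m) rbar abar bbar blow"
    and "\<kappa> \<equiv> olp_kappa (olp_W CARD('m) rbar abar bbar blow) blow C T" and "\<eta> \<equiv> 1 / sqrt (C * T * ln T)"
  assumes "9 \<le> C"
  shows "1 - real CARD('m) / T \<le> measure (PiM {1..T} (\<lambda>_. D))
           {\<omega> \<in> space (PiM {1..T} (\<lambda>_. D)). \<forall>t\<in>{1..T+1}. norm (price \<eta> \<kappa> \<omega> t) \<le> 2 * W}"
    (is "_ \<le> measure ?P ?good")
proof -
  interpret P: prob_space ?P by (intro prob_space_PiM prob_space_axioms)
  have "0 \<le> C * T * ln T"
    using assms(4) by (cases "T = 0") auto
  then have "0 \<le> 4 * W * sqrt (C * T * ln T) / blow" "4 * W * sqrt (C * T * ln T) / blow \<le> \<kappa>"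
    using W_pos blow_pos by (simp_all add: W_def \<kappa>_def olp_kappa_def)
  consider "real T \<le> \<kappa>" | "\<kappa> < T" "T \<le> CARD('m)" | "\<kappa> < T" "CARD('m) < T"
    by linarith
  then show ?thesis
  proof cases
    case 1
    have "price \<eta> \<kappa> \<omega> t = 0" if "t \<in> {1..T+1}" for \<omega> :: "nat \<Rightarrow> 'm order" and t
    proof (rule price_warm_up)
      show "real t \<le> \<kappa> + 1" using that 1 by (simp add: add.commute)
    qed
    then have "?good = space ?P"
      using W_pos by (auto simp: W_def)
    then show ?thesis
      by (simp add: P.prob_space del: One_nat_def)
  next
    case 2
    with \<open>0 \<le> 4 * W * sqrt (C * T * ln T) / blow\<close> \<open>_ \<le> \<kappa>\<close>
    have "1 - real CARD('m) / T \<le> 0"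
      by (simp add: field_simps)
    then show ?thesis
      by (meson measure_nonneg order_trans)
  next
    case 3
    then have "2 \<le> T"
      using zero_less_card_finite[where 'a='m] by linarith
    with 3 have "1 - 1 / T \<le> measure ?P ?good"
      using prob_norm_price_le_after_warm_up[OF assms(4)] \<open>_ \<le> \<kappa>\<close> by (simp add: W_def \<eta>_def)
    moreover have "1 / real T \<le> real CARD('m) / T"
      by (simp add: divide_right_mono)
    ultimately show ?thesis by linarith
  qed
qed

end

theorem lemma1:
  fixes D :: "(real \<times> (real^'m) \<times> (real^'m)) measure"
    and rbar abar bbar blow C :: real and T :: nat
  assumes "prob_space D" and "sets D = sets borel"
    and "rbar > 0" and "abar > 0" and "bbar > 0" and "blow > 0"
    and "AE (r, a, b) in D. \<bar>r\<bar> < rbar \<and> norm a < abar \<and> (\<forall>j. \<bar>b $ j\<bar> < bbar) \<and> (\<forall>j. b $ j \<ge> 0)"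
    and "\<forall>j. (\<integral>(r, a, b). b $ j \<partial>D) > blow"
    and "C \<ge> 9"
    and "real T \<ge> real CARD('m) * (bbar + abar)^2"
  shows "measure (PiM {1..T} (\<lambda>_. D))
           {\<omega> \<in> space (PiM {1..T} (\<lambda>_. D)).
              \<forall>t\<in>{1..T+1}. norm (olp_price rbar abar bbar blow C T \<omega> t)
                             \<le> 2 * olp_W CARD('m) rbar abar bbar blow}
         \<ge> 1 - real CARD('m) / real T"
proof -
  interpret bounded_order_distribution D rbar abar bbar blow
    using assms(1-8)
    by (intro bounded_order_distribution.intro order_distribution.intro
        bounded_order_distribution_axioms.intro order_distribution_axioms.intro)
       (simp_all add: bounded_order_def)
  have "olp_price rbar abar bbar blow C T \<omega> t
          = price (1 / sqrt (C * T * ln T)) (olp_kappa (olp_W CARD('m) rbar abar bbar blow) blow C T) \<omega> t"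
    for \<omega> :: "nat \<Rightarrow> 'm order" and t
    by (simp add: olp_price_def fst_olp_state)
  with prob_norm_price_le[OF assms(9)] show ?thesis
    by simp
qed

end
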